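(* Let $V\in\mathcal{R}$ be built from $v\in\mathcal{F}$, and let $(v_n)$ be any generating sequence of $V$ starting from $v_0=v$ (i.e. $v_{n+1}$ built from $v_n$ and $V$ extends every $v_n$). Then $L(v_n,v)=\dfrac{\rho_{v_n}-\rho_v}{1+\rho_{v_n}}$ for every $n\ge1$, the limit $L(V,v)=\lim_n L(v_n,v)$ exists and does not depend on the choice of $(v_n)$, and $$L(V,v)=\frac{\rho_V-\rho_v}{1+\rho_V}=1-\frac{1+\rho_v}{1+\rho_V}$$ when $V\in\mathcal{R}^*$, while $L(V,v)=1$ when $V\notin\mathcal{R}^*$. Moreover, if $V\in\mathcal{R}^*$ then $0<L(V,v)<1$, and for any generating sequence $(u_n)$ of $V$ the sequence $L(V,u_n)$ is nonincreasing with limit $0$.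
   Context: $\mathcal F$ = finite $\{0,1\}$-words starting and ending with $0$; $Y,Z$ count $1$s and $0$s, $\rho_\alpha=Y(\alpha)/Z(\alpha)$. $u$ built from $v$: $u=v1^{a_1}v\cdots v1^{a_{q-1}}v$ ($q\ge2$, $a_i\ge0$). Generating sequence (in general, starting from $v_0=0$): $v_{n+1}$ built from $v_n$. $\mathcal R$: aperiodic $V\in\{0,1\}^{\mathbb N}$ extending all $v_n$ of some generating sequence. $V$ built from $v$: $V=v1^{a_1}v1^{a_2}v\cdots$ with $a_i\ge0$. For $V\in\mathcal R$, $\rho_V=\lim_n\rho_{v_n}\in[0,\infty]$ for any generating sequence $(v_n)$ of $V$ (this limit is independent of the sequence), and $\mathcal R^*=\{V\in\mathcal R:\rho_V<\infty\}$. For $\alpha,\beta\in\mathcal F$ with $\alpha=\beta1^{a_1}\beta\cdots\beta1^{a_{q-1}}\beta$, $L(\alpha,\beta)=\frac{1}{\mathrm{lh}(\alpha)}\sum_{j=1}^{q-1}a_j$. *)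

theory Defs
  imports "HOL-Analysis.Analysis"
begin

text \<open>Finite words over {0,1} are bool lists (False = 0, True = 1);
  infinite words are functions nat \<Rightarrow> bool.\<close>

definition inF :: "bool list \<Rightarrow> bool" where
  "inF w \<longleftrightarrow> w \<noteq> [] \<and> hd w = False \<and> last w = False"

definition Ycnt :: "bool list \<Rightarrow> nat" where
  "Ycnt w = count_list w True"

definition Zcnt :: "bool list \<Rightarrow> nat" where
  "Zcnt w = count_list w False"

definition rho :: "bool list \<Rightarrow> real" where
  "rho w = real (Ycnt w) / real (Zcnt w)"

definition fin_build :: "bool list \<Rightarrow> nat list \<Rightarrow> bool list" where
  "fin_build v as = v @ concat (map (\<lambda>k. replicate k True @ v) as)"

text \<open>u is built from v: u = v 1^{a_1} v ... 1^{a_{q-1}} v with q \<ge> 2\<close>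
definition built_from :: "bool list \<Rightarrow> bool list \<Rightarrow> bool" where
  "built_from u v \<longleftrightarrow> (\<exists>as. length as \<ge> 1 \<and> u = fin_build v as)"

definition L :: "bool list \<Rightarrow> bool list \<Rightarrow> real" where
  "L \<alpha> \<beta> = real (sum_list (SOME as. length as \<ge> 1 \<and> \<alpha> = fin_build \<beta> as))
              / real (length \<alpha>)"

definition extends :: "(nat \<Rightarrow> bool) \<Rightarrow> bool list \<Rightarrow> bool" where
  "extends V w \<longleftrightarrow> (\<forall>i<length w. V i = w ! i)"

definition gen_seq_from :: "bool list \<Rightarrow> (nat \<Rightarrow> bool list) \<Rightarrow> bool" where
  "gen_seq_from w vs \<longleftrightarrow> vs 0 = w \<and> (\<forall>n. built_from (vs (Suc n)) (vs n))"

definition gen_seq_of_from :: "(nat \<Rightarrow> bool) \<Rightarrow> bool list \<Rightarrow> (nat \<Rightarrow> bool list) \<Rightarrow> bool" where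
  "gen_seq_of_from V w vs \<longleftrightarrow> gen_seq_from w vs \<and> (\<forall>n. extends V (vs n))"

definition gen_seq_of :: "(nat \<Rightarrow> bool) \<Rightarrow> (nat \<Rightarrow> bool list) \<Rightarrow> bool" where
  "gen_seq_of V vs \<longleftrightarrow> gen_seq_of_from V [False] vs"

definition aperiodic :: "(nat \<Rightarrow> bool) \<Rightarrow> bool" where
  "aperiodic V \<longleftrightarrow> \<not> (\<exists>p>0. \<exists>N. \<forall>i\<ge>N. V (i + p) = V i)"

definition inR :: "(nat \<Rightarrow> bool) \<Rightarrow> bool" where
  "inR V \<longleftrightarrow> aperiodic V \<and> (\<exists>vs. gen_seq_of V vs)"

text \<open>rho_V = lim rho_{v_n} in [0,\<infinity>] (the paper shows independence of the sequence)\<close>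
definition rhoV :: "(nat \<Rightarrow> bool) \<Rightarrow> ereal" where
  "rhoV V = lim (\<lambda>n. ereal (rho ((SOME vs. gen_seq_of V vs) n)))"

definition inRstar :: "(nat \<Rightarrow> bool) \<Rightarrow> bool" where
  "inRstar V \<longleftrightarrow> inR V \<and> rhoV V < \<infinity>"

definition inf_built_from :: "(nat \<Rightarrow> bool) \<Rightarrow> bool list \<Rightarrow> bool" where
  "inf_built_from V v \<longleftrightarrow> (\<exists>a::nat \<Rightarrow> nat. \<forall>n. extends V (fin_build v (map a [0..<n])))"

definition LV :: "(nat \<Rightarrow> bool) \<Rightarrow> bool list \<Rightarrow> real" where
  "LV V v = lim (\<lambda>n. L ((SOME vs. gen_seq_of_from V v vs) n) v)"

end

theory Submission
  imports Defs
begin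

text \<open>If u = v 1^a(1) v ... 1^a(q-1) v, then Z(u) = q Z(v) and Y(u) = q Y(v) + \<Sum>a(j); hence
  L(u,v) = \<Sum>a(j) / lh(u) equals (\<rho>(u) - \<rho>(v)) / (1 + \<rho>(u)), and \<rho>(u) \<ge> \<rho>(v).
  So \<rho> increases along a generating sequence. A term of one generating sequence of V is a prefix
  of later terms of any other, and the density of a long prefix of a word built from x is at least
  \<rho>(x) minus a vanishing error; hence the supremum of \<rho> is the same for all generating sequences
  and equals \<rho>(V). Passing to the limit in the formula for L gives the claims. L(V,v) > 0 because
  \<rho>(v(n)) = \<rho>(v) for all n would force every exponent to vanish, making V = v v v ... periodic.\<close>

lemma count_list_replicate: "count_list (replicate k a) x = (if a = x then k else 0)"
  by (induction k) auto

lemma Ycnt_append [simp]: "Ycnt (xs @ ys) = Ycnt xs + Ycnt ys"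
  by (simp add: Ycnt_def)

lemma Zcnt_append [simp]: "Zcnt (xs @ ys) = Zcnt xs + Zcnt ys"
  by (simp add: Zcnt_def)

lemma Ycnt_add_Zcnt: "Ycnt w + Zcnt w = length w"
  unfolding Ycnt_def Zcnt_def by (induction w) auto

lemma Zcnt_pos_if_inF: "inF v \<Longrightarrow> 0 < Zcnt v"
  by (cases v) (auto simp: inF_def Zcnt_def)

lemma rho_nonneg: "0 \<le> rho w"
  by (simp add: rho_def)

lemma fin_build_Nil [simp]: "fin_build v [] = v"
  by (simp add: fin_build_def)

lemma fin_build_Cons: "fin_build v (a # as) = v @ replicate a True @ fin_build v as"
  by (simp add: fin_build_def)

lemma fin_build_snoc: "fin_build v (as @ [a]) = fin_build v as @ replicate a True @ v"
  by (simp add: fin_build_def)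

lemma fin_build_append_Cons:
  "fin_build v as @ replicate b True @ fin_build v cs = fin_build v (as @ b # cs)"
  by (simp add: fin_build_def)

lemma fin_build_fin_build:
  "fin_build (fin_build v as) bs = fin_build v (as @ concat (map (\<lambda>b. b # as) bs))"
  by (induction bs) (simp_all add: fin_build_Cons fin_build_append_Cons)

lemma Ycnt_fin_build: "Ycnt (fin_build v as) = (length as + 1) * Ycnt v + sum_list as"
  unfolding Ycnt_def fin_build_def by (induction as) (auto simp: count_list_replicate)

lemma Zcnt_fin_build: "Zcnt (fin_build v as) = (length as + 1) * Zcnt v"
  unfolding Zcnt_def fin_build_def by (induction as) (auto simp: count_list_replicate)

lemma fin_build_eq_power:
  "sum_list as = 0 \<Longrightarrow> fin_build v as = concat (replicate (length as + 1) v)"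
  unfolding fin_build_def by (induction as) auto

lemma rho_fin_build:
  "rho (fin_build v as) = rho v + real (sum_list as) / real (Zcnt (fin_build v as))"
proof (cases "Zcnt v = 0")
  case False
  define q :: real where "q = length as + 1"
  have "0 < q" by (simp add: q_def)
  have "rho (fin_build v as) = (q * Ycnt v + sum_list as) / (q * Zcnt v)"
    by (simp add: rho_def Ycnt_fin_build Zcnt_fin_build q_def algebra_simps)
  also have "\<dots> = rho v + real (sum_list as) / (q * Zcnt v)"
    using \<open>0 < q\<close> by (simp add: rho_def add_divide_distrib)
  finally show ?thesis by (simp add: Zcnt_fin_build q_def algebra_simps)
qed (simp add: rho_def Zcnt_fin_build)

lemma rho_le_rho_fin_build: "rho v \<le> rho (fin_build v as)"
  by (simp add: rho_fin_build)

lemma rho_fin_build_eq_iff: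
  assumes "0 < Zcnt v"
  shows "rho (fin_build v as) = rho v \<longleftrightarrow> sum_list as = 0"
proof -
  have "0 < Zcnt (fin_build v as)"
    using assms by (simp add: Zcnt_fin_build)
  then show ?thesis
    by (simp add: rho_fin_build)
qed

text \<open>The list of exponents is determined by \<open>u\<close> and \<open>v\<close> (count the zeros, then the ones), so the
  choice operator in the definition of \<open>L\<close> does no harm.\<close>

lemma L_fin_build:
  assumes "0 < Zcnt v" and "1 \<le> length as"
  shows "L (fin_build v as) v = real (sum_list as) / real (length (fin_build v as))"
proof -
  let ?P = "\<lambda>bs. 1 \<le> length bs \<and> fin_build v as = fin_build v bs"
  obtain bs where bs: "bs = (SOME bs. ?P bs)" and eq: "fin_build v as = fin_build v bs"
    using someI[of ?P as] assms(2) by blast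
  have "length bs = length as"
    using arg_cong[OF eq, of Zcnt] assms(1) by (simp add: Zcnt_fin_build)
  then have "sum_list bs = sum_list as"
    using arg_cong[OF eq, of Ycnt] by (simp add: Ycnt_fin_build)
  then show ?thesis
    unfolding L_def bs by simp
qed

lemma L_fin_build_eq_rho:
  assumes "0 < Zcnt v" and "1 \<le> length as"
  shows "L (fin_build v as) v = (rho (fin_build v as) - rho v) / (1 + rho (fin_build v as))"
proof -
  let ?u = "fin_build v as"
  define q :: real where "q = length as + 1"
  have Y: "real (Ycnt ?u) = q * Ycnt v + sum_list as" and Z: "real (Zcnt ?u) = q * Zcnt v"
    by (simp_all add: Ycnt_fin_build Zcnt_fin_build q_def algebra_simps)
  have len: "real (length ?u) = q * Ycnt v + sum_list as + q * Zcnt v"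
    using Y Z by (simp flip: Ycnt_add_Zcnt)
  have "0 < q" and "0 < real (Zcnt v)"
    using assms(1) by (simp_all add: q_def)
  then show ?thesis
    unfolding L_fin_build[OF assms] rho_def len Y Z by (simp add: field_simps)
qed

lemma gen_seq_from_fin_build:
  assumes "gen_seq_from v ws"
  shows "\<exists>as. ws (m + k) = fin_build (ws m) as \<and> (0 < k \<longrightarrow> 1 \<le> length as)"
proof (induction k)
  case 0
  show ?case by (rule exI[of _ "[]"]) simp
next
  case (Suc k)
  then obtain as where as: "ws (m + k) = fin_build (ws m) as" by blast
  from assms obtain bs where bs: "1 \<le> length bs" "ws (Suc (m + k)) = fin_build (ws (m + k)) bs"
    unfolding gen_seq_from_def built_from_def by blast
  show ?case
    by (rule exI[of _ "as @ concat (map (\<lambda>b. b # as) bs)"])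
       (use bs as in \<open>cases bs, auto simp: fin_build_fin_build\<close>)
qed

lemma L_gen_seq_eq_rho:
  assumes "gen_seq_from v ws" and "0 < Zcnt v" and "1 \<le> n"
  shows "L (ws n) v = (rho (ws n) - rho v) / (1 + rho (ws n))"
proof -
  obtain as where "ws (0 + n) = fin_build (ws 0) as" "1 \<le> length as"
    using gen_seq_from_fin_build[OF assms(1), of 0 n] assms(3) by auto
  moreover have "ws 0 = v"
    using assms(1) by (simp add: gen_seq_from_def)
  ultimately show ?thesis
    using L_fin_build_eq_rho[OF assms(2)] by simp
qed

lemma Zcnt_gen_seq_ge:
  assumes "gen_seq_from v ws" and "0 < Zcnt v"
  shows "n + 1 \<le> Zcnt (ws n)"
proof (induction n)
  case 0
  then show ?case using assms by (simp add: gen_seq_from_def)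
next
  case (Suc n)
  from assms(1) obtain bs where "1 \<le> length bs" "ws (Suc n) = fin_build (ws n) bs"
    unfolding gen_seq_from_def built_from_def by blast
  then have "2 * Zcnt (ws n) \<le> Zcnt (ws (Suc n))"
    by (simp add: Zcnt_fin_build)
  with Suc show ?case by simp
qed

lemma incseq_rho_gen_seq:
  assumes "gen_seq_from v ws"
  shows "incseq (\<lambda>n. rho (ws n))"
proof (rule incseq_SucI)
  fix n
  obtain as where "ws (n + 1) = fin_build (ws n) as"
    using gen_seq_from_fin_build[OF assms, of n 1] by blast
  then show "rho (ws n) \<le> rho (ws (Suc n))"
    using rho_le_rho_fin_build by simp
qed

lemma shift_gen_seq_of_from:
  "gen_seq_of_from V w ws \<Longrightarrow> gen_seq_of_from V (ws n) (\<lambda>k. ws (n + k))"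
  by (simp add: gen_seq_of_from_def gen_seq_from_def)

subsection \<open>Independence of the limiting density\<close>

lemma extends_imp_take:
  assumes "extends V a" and "extends V b" and "length a \<le> length b"
  shows "a = take (length a) b"
  using assms by (intro nth_equalityI) (auto simp: extends_def)

text \<open>A prefix of a word built from \<open>x\<close> consists of complete copies of \<open>x\<close> with their ones and at
  most one incomplete copy, which contributes at most \<open>Z(x)\<close> zeros.\<close>

lemma Zcnt_take_fin_build_le:
  "Ycnt x * Zcnt (take k (fin_build x as)) \<le> Ycnt (take k (fin_build x as)) * Zcnt x + Ycnt x * Zcnt x"
proof (induction as arbitrary: k rule: rev_induct)
  case Nil
  have "Zcnt (take k x) \<le> Zcnt x"
    by (metis Zcnt_append append_take_drop_id le_add1)
  then show ?case by (simp add: trans_le_add2)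
next
  case (snoc a as)
  let ?u = "fin_build x as" and ?w = "fin_build x (as @ [a])"
  show ?case
  proof (cases "k \<le> length ?u")
    case True
    then show ?thesis using snoc.IH[of k] by (simp add: fin_build_snoc)
  next
    case False
    let ?r = "take (k - length ?u) (replicate a True @ x)"
    have split: "take k ?w = ?u @ ?r"
      using False by (simp add: fin_build_snoc)
    have "Zcnt ?r \<le> Zcnt x"
      by (metis Zcnt_append append_take_drop_id le_add1 Zcnt_def count_list_replicate add_0)
    then have "Ycnt x * Zcnt (take k ?w) \<le> Ycnt x * ((length as + 2) * Zcnt x)"
      unfolding split by (simp add: Zcnt_fin_build)
    also have "\<dots> = (length as + 1) * Ycnt x * Zcnt x + Ycnt x * Zcnt x"
      by (simp add: algebra_simps)
    also have "\<dots> \<le> Ycnt (take k ?w) * Zcnt x + Ycnt x * Zcnt x"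
      unfolding split by (simp add: Ycnt_fin_build)
    finally show ?thesis .
  qed
qed

lemma filterlim_Zcnt_gen_seq:
  assumes "gen_seq_from v ws" and "0 < Zcnt v"
  shows "filterlim (\<lambda>n. real (Zcnt (ws n))) at_infinity sequentially"
proof -
  have "filterlim (\<lambda>n. real (Zcnt (ws n))) at_top sequentially"
    by (rule filterlim_at_top_mono[OF filterlim_real_sequentially])
       (use Zcnt_gen_seq_ge[OF assms] in \<open>auto intro!: always_eventually simp: Suc_le_eq less_imp_le\<close>)
  then show ?thesis by (rule filterlim_at_top_imp_at_infinity)
qed

lemma rho_gen_seq_le_rho_gen_seq_add:
  assumes x: "gen_seq_of_from V x0 xs" "0 < Zcnt x0"
    and y: "gen_seq_of_from V y0 ys" "0 < Zcnt y0"
  shows "rho (xs n) - Ycnt (xs n) / Zcnt (ys m) \<le> rho (ys m)"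
proof -
  have gx: "gen_seq_from x0 xs" and gy: "gen_seq_from y0 ys"
    using x y by (auto simp: gen_seq_of_from_def)
  define n' where "n' = n + length (ys m)"
  have "n' + 1 \<le> Zcnt (xs n')"
    by (rule Zcnt_gen_seq_ge[OF gx x(2)])
  then have "length (ys m) \<le> length (xs n')"
    using Ycnt_add_Zcnt[of "xs n'"] unfolding n'_def by linarith
  then have prefix: "ys m = take (length (ys m)) (xs n')"
    using extends_imp_take[of V "ys m" "xs n'"] x(1) y(1) by (auto simp: gen_seq_of_from_def)
  obtain as where "xs n' = fin_build (xs n) as"
    using gen_seq_from_fin_build[OF gx, of n "length (ys m)"] unfolding n'_def by blast
  then have "Ycnt (xs n) * Zcnt (ys m) \<le> (Ycnt (ys m) + Ycnt (xs n)) * Zcnt (xs n)"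
    using Zcnt_take_fin_build_le[of "xs n" "length (ys m)" as] prefix by (simp add: algebra_simps)
  then have "real (Ycnt (xs n)) * Zcnt (ys m) \<le> (real (Ycnt (ys m)) + Ycnt (xs n)) * Zcnt (xs n)"
    by (metis of_nat_add of_nat_le_iff of_nat_mult)
  moreover have "0 < real (Zcnt (xs n))" and "0 < real (Zcnt (ys m))"
    using Zcnt_gen_seq_ge[OF gx x(2), of n] Zcnt_gen_seq_ge[OF gy y(2), of m] by simp_all
  ultimately have "rho (xs n) \<le> (real (Ycnt (ys m)) + Ycnt (xs n)) / Zcnt (ys m)"
    unfolding rho_def by (simp add: divide_simps)
  then show ?thesis
    unfolding rho_def by (simp add: add_divide_distrib)
qed

lemma rho_le_SUP_rho:
  assumes x: "gen_seq_of_from V x0 xs" "0 < Zcnt x0"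
    and y: "gen_seq_of_from V y0 ys" "0 < Zcnt y0"
  shows "ereal (rho (xs n)) \<le> (SUP m. ereal (rho (ys m)))"
proof -
  have gy: "gen_seq_from y0 ys"
    using y by (simp add: gen_seq_of_from_def)
  have "(\<lambda>m. ereal (rho (xs n) - Ycnt (xs n) / Zcnt (ys m))) \<longlonglongrightarrow> ereal (rho (xs n))"
    unfolding lim_ereal
    using tendsto_diff[OF tendsto_const tendsto_divide_0[OF tendsto_const filterlim_Zcnt_gen_seq[OF gy y(2)]]]
    by simp
  moreover have "(\<lambda>m. ereal (rho (ys m))) \<longlonglongrightarrow> (SUP m. ereal (rho (ys m)))"
    using incseq_rho_gen_seq[OF gy] by (intro LIMSEQ_SUP) (auto simp: incseq_def)
  ultimately show ?thesis
    by (rule LIMSEQ_le) (use rho_gen_seq_le_rho_gen_seq_add[OF x y] in auto)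
qed

lemma SUP_rho_gen_seq_eq:
  assumes "gen_seq_of_from V x0 xs" "0 < Zcnt x0"
    and "gen_seq_of_from V y0 ys" "0 < Zcnt y0"
  shows "(SUP n. ereal (rho (xs n))) = (SUP m. ereal (rho (ys m)))"
  by (rule antisym; rule SUP_least)
     (use rho_le_SUP_rho[OF assms(1-4)] rho_le_SUP_rho[OF assms(3,4,1,2)] in auto)

lemma inR_gen_seq_of:
  assumes "inR V"
  shows "gen_seq_of_from V [False] (SOME us. gen_seq_of V us)"
  using assms someI_ex[of "gen_seq_of V"] by (simp add: inR_def gen_seq_of_def)

lemma rhoV_eq_SUP:
  assumes "inR V" and "gen_seq_of_from V w ws" and "0 < Zcnt w"
  shows "rhoV V = (SUP n. ereal (rho (ws n)))"
proof -
  let ?u = "SOME us. gen_seq_of V us"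
  have u: "gen_seq_of_from V [False] ?u" and Z: "0 < Zcnt [False]"
    using inR_gen_seq_of[OF assms(1)] by (simp_all add: Zcnt_def)
  have "(\<lambda>n. ereal (rho (?u n))) \<longlonglongrightarrow> (SUP n. ereal (rho (?u n)))"
    using incseq_rho_gen_seq u by (intro LIMSEQ_SUP) (auto simp: incseq_def gen_seq_of_from_def)
  then have "rhoV V = (SUP n. ereal (rho (?u n)))"
    unfolding rhoV_def by (rule limI)
  also have "\<dots> = (SUP n. ereal (rho (ws n)))"
    by (rule SUP_rho_gen_seq_eq[OF u Z assms(2,3)])
  finally show ?thesis .
qed

lemma tendsto_rho_gen_seq:
  assumes "inR V" and "gen_seq_of_from V w ws" and "0 < Zcnt w"
  shows "(\<lambda>n. ereal (rho (ws n))) \<longlonglongrightarrow> rhoV V"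
  unfolding rhoV_eq_SUP[OF assms]
  using incseq_rho_gen_seq assms(2) by (intro LIMSEQ_SUP) (auto simp: incseq_def gen_seq_of_from_def)

lemma rho_le_rhoV:
  assumes "inR V" and "gen_seq_of_from V w ws" and "0 < Zcnt w"
  shows "ereal (rho (ws n)) \<le> rhoV V"
  unfolding rhoV_eq_SUP[OF assms] by (rule SUP_upper) simp

lemma rhoV_nonneg:
  assumes "inR V"
  shows "0 \<le> rhoV V"
proof -
  have "0 \<le> ereal (rho ((SOME us. gen_seq_of V us) 0))"
    by (simp add: rho_nonneg)
  also have "\<dots> \<le> rhoV V"
    by (rule rho_le_rhoV[OF assms inR_gen_seq_of[OF assms]]) (simp add: Zcnt_def)
  finally show ?thesis .
qed

lemma rhoV_finite:
  assumes "inRstar V"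
  obtains r where "rhoV V = ereal r" and "0 \<le> r"
  using assms rhoV_nonneg[of V] that by (cases "rhoV V") (auto simp: inRstar_def)

subsection \<open>Aperiodicity\<close>

lemma concat_replicate_concat_replicate:
  "concat (replicate a (concat (replicate b v))) = concat (replicate (a * b) v)"
  by (induction a) (auto simp: replicate_add)

lemma nth_concat_replicate:
  "i < k * length v \<Longrightarrow> concat (replicate k v) ! i = v ! (i mod length v)"
proof (induction k arbitrary: i)
  case (Suc k)
  then show ?case
    by (cases "i < length v") (auto simp: nth_append mod_if)
qed simp

lemma gen_seq_const_rho_eq_power:
  assumes "gen_seq_from v ws" and "0 < Zcnt v" and "\<forall>n. rho (ws n) = rho v"
  shows "\<exists>k. ws n = concat (replicate k v)"
proof (induction n)
  case 0
  show ?case using assms(1) by (intro exI[of _ 1]) (simp add: gen_seq_from_def)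
next
  case (Suc n)
  then obtain k where k: "ws n = concat (replicate k v)" by blast
  from assms(1) obtain bs where bs: "ws (Suc n) = fin_build (ws n) bs"
    unfolding gen_seq_from_def built_from_def by blast
  have "0 < Zcnt (ws n)"
    using Zcnt_gen_seq_ge[OF assms(1,2), of n] by simp
  then have "sum_list bs = 0"
    using rho_fin_build_eq_iff[of "ws n" bs] bs assms(3) by metis
  then have "ws (Suc n) = concat (replicate ((length bs + 1) * k) v)"
    using bs k fin_build_eq_power concat_replicate_concat_replicate by metis
  then show ?case by blast
qed

lemma not_aperiodic_if_const_rho:
  assumes "gen_seq_of_from V v ws" and "0 < Zcnt v" and "\<forall>n. rho (ws n) = rho v"
  shows "\<not> aperiodic V"
proof -
  have g: "gen_seq_from v ws"
    using assms(1) by (simp add: gen_seq_of_from_def)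
  have "V i = v ! (i mod length v)" for i
  proof -
    obtain k where k: "ws i = concat (replicate k v)"
      using gen_seq_const_rho_eq_power[OF g assms(2,3)] by blast
    have "i + 1 \<le> Zcnt (ws i)"
      by (rule Zcnt_gen_seq_ge[OF g assms(2)])
    then have i: "i < length (ws i)"
      using Ycnt_add_Zcnt[of "ws i"] by linarith
    then have "V i = ws i ! i"
      using assms(1) by (auto simp: gen_seq_of_from_def extends_def)
    then show ?thesis
      using i nth_concat_replicate[of i k v] k by (simp add: length_concat sum_list_replicate)
  qed
  moreover have "0 < length v"
    using assms(2) by (cases v) (auto simp: Zcnt_def)
  ultimately show ?thesis
    unfolding aperiodic_def by auto
qed

lemma rho_less_rhoV:
  assumes "inR V" and "gen_seq_of_from V w ws" and "0 < Zcnt w"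
  shows "ereal (rho w) < rhoV V"
proof (rule ccontr)
  assume "\<not> ereal (rho w) < rhoV V"
  have g: "gen_seq_from w ws"
    using assms(2) by (simp add: gen_seq_of_from_def)
  have "rho (ws n) = rho w" for n
  proof (rule antisym)
    show "rho (ws n) \<le> rho w"
      using rho_le_rhoV[OF assms, of n] \<open>\<not> ereal (rho w) < rhoV V\<close>
      by (metis ereal_less_eq(3) not_less order_trans)
    show "rho w \<le> rho (ws n)"
      using incseq_rho_gen_seq[OF g] g by (auto simp: incseq_def gen_seq_from_def)
  qed
  then have "\<not> aperiodic V"
    using not_aperiodic_if_const_rho[OF assms(2,3)] by blast
  then show False
    using assms(1) by (simp add: inR_def)
qed

lemma diff_divide_one_plus:
  fixes x y :: real
  assumes "0 \<le> x"
  shows "(x - y) / (1 + x) = 1 - (1 + y) / (1 + x)"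
  using assms by (simp add: field_simps)

definition L_of_rho :: "ereal \<Rightarrow> real \<Rightarrow> real" where
  "L_of_rho R x = (if R = \<infinity> then 1 else (real_of_ereal R - x) / (1 + real_of_ereal R))"

lemma tendsto_L_gen_seq:
  assumes "inR V" and "gen_seq_of_from V v ws" and "0 < Zcnt v"
  shows "(\<lambda>n. L (ws n) v) \<longlonglongrightarrow> L_of_rho (rhoV V) (rho v)"
proof -
  have g: "gen_seq_from v ws"
    using assms(2) by (simp add: gen_seq_of_from_def)
  have lim: "(\<lambda>n. ereal (rho (ws n))) \<longlonglongrightarrow> rhoV V"
    by (rule tendsto_rho_gen_seq[OF assms])
  have eq: "\<forall>\<^sub>F n in sequentially. 1 - (1 + rho v) / (1 + rho (ws n)) = L (ws n) v"
    using L_gen_seq_eq_rho[OF g assms(3)] diff_divide_one_plus[OF rho_nonneg]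
    by (intro eventually_sequentiallyI[of 1]) simp
  show ?thesis
  proof (cases "rhoV V = \<infinity>")
    case True
    then have "filterlim (\<lambda>n. 1 + rho (ws n)) at_infinity sequentially"
      using lim tendsto_PInfty_eq_at_top
      by (intro filterlim_at_top_imp_at_infinity filterlim_tendsto_add_at_top[OF tendsto_const]) auto
    then have "(\<lambda>n. 1 - (1 + rho v) / (1 + rho (ws n))) \<longlonglongrightarrow> 1 - 0"
      by (rule tendsto_diff[OF tendsto_const tendsto_divide_0[OF tendsto_const]])
    then show ?thesis
      using tendsto_cong[OF eq] True by (simp add: L_of_rho_def)
  next
    case False
    with assms obtain r where r: "rhoV V = ereal r" "0 \<le> r"
      using rhoV_finite by (auto simp: inRstar_def)
    then have "(\<lambda>n. 1 - (1 + rho v) / (1 + rho (ws n))) \<longlonglongrightarrow> 1 - (1 + rho v) / (1 + r)"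
      using lim by (intro tendsto_intros) auto
    then show ?thesis
      using tendsto_cong[OF eq] r diff_divide_one_plus[OF r(2)] by (simp add: L_of_rho_def)
  qed
qed

lemma LV_eq_L_of_rho:
  assumes "inR V" and "gen_seq_of_from V v ws" and "0 < Zcnt v"
  shows "LV V v = L_of_rho (rhoV V) (rho v)"
  unfolding LV_def
  by (rule limI, rule tendsto_L_gen_seq[OF assms(1) someI[of "gen_seq_of_from V v", OF assms(2)] assms(3)])

lemma LV_gen_seq_decseq_tendsto_0:
  assumes "inRstar V" and "gen_seq_of V us"
  shows "decseq (\<lambda>n. LV V (us n)) \<and> (\<lambda>n. LV V (us n)) \<longlonglongrightarrow> 0"
proof -
  from assms(1) obtain r where r: "rhoV V = ereal r" "0 \<le> r"
    by (rule rhoV_finite)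
  have R: "inR V" and u: "gen_seq_of_from V [False] us"
    using assms by (simp_all add: inRstar_def gen_seq_of_def)
  have g: "gen_seq_from [False] us" and Z: "0 < Zcnt [False]"
    using u by (simp_all add: gen_seq_of_from_def Zcnt_def)
  have LV: "LV V (us n) = (r - rho (us n)) / (1 + r)" for n
  proof -
    have "0 < Zcnt (us n)"
      using Zcnt_gen_seq_ge[OF g Z, of n] by simp
    with LV_eq_L_of_rho[OF R shift_gen_seq_of_from[OF u]] r show ?thesis
      by (simp add: L_of_rho_def)
  qed
  have "decseq (\<lambda>n. LV V (us n))"
    using incseq_rho_gen_seq[OF g] r(2)
    unfolding decseq_def LV by (auto simp: incseq_def divide_right_mono)
  moreover have "(\<lambda>n. rho (us n)) \<longlonglongrightarrow> r"
    using tendsto_rho_gen_seq[OF R u Z] r by simp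
  then have "(\<lambda>n. (r - rho (us n)) / (1 + r)) \<longlonglongrightarrow> (r - r) / (1 + r)"
    using r(2) by (intro tendsto_intros) auto
  ultimately show ?thesis
    unfolding LV by simp
qed

theorem mainTheorem8:
  fixes V :: "nat \<Rightarrow> bool" and v :: "bool list" and vs :: "nat \<Rightarrow> bool list"
  assumes "inR V" and "inF v" and "inf_built_from V v"
    and "gen_seq_of_from V v vs"
  shows "(\<forall>n\<ge>1. L (vs n) v = (rho (vs n) - rho v) / (1 + rho (vs n)))
    \<and> (\<forall>ws. gen_seq_of_from V v ws \<longrightarrow> (\<lambda>n. L (ws n) v) \<longlonglongrightarrow> LV V v)
    \<and> (inRstar V \<longrightarrow>
         LV V v = (real_of_ereal (rhoV V) - rho v) / (1 + real_of_ereal (rhoV V))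
       \<and> LV V v = 1 - (1 + rho v) / (1 + real_of_ereal (rhoV V)))
    \<and> (\<not> inRstar V \<longrightarrow> LV V v = 1)
    \<and> (inRstar V \<longrightarrow> 0 < LV V v \<and> LV V v < 1
         \<and> (\<forall>us. gen_seq_of V us \<longrightarrow>
              decseq (\<lambda>n. LV V (us n)) \<and> (\<lambda>n. LV V (us n)) \<longlonglongrightarrow> 0))"
proof -
  have Zv: "0 < Zcnt v"
    using Zcnt_pos_if_inF[OF assms(2)] .
  have LV: "LV V v = L_of_rho (rhoV V) (rho v)"
    by (rule LV_eq_L_of_rho[OF assms(1,4) Zv])
  have formula: "\<forall>n\<ge>1. L (vs n) v = (rho (vs n) - rho v) / (1 + rho (vs n))"
    using L_gen_seq_eq_rho[of v vs] assms(4) Zv by (simp add: gen_seq_of_from_def)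
  have limit: "\<forall>ws. gen_seq_of_from V v ws \<longrightarrow> (\<lambda>n. L (ws n) v) \<longlonglongrightarrow> LV V v"
    using tendsto_L_gen_seq[OF assms(1) _ Zv] LV by simp
  have finite: "LV V v = (real_of_ereal (rhoV V) - rho v) / (1 + real_of_ereal (rhoV V))
      \<and> LV V v = 1 - (1 + rho v) / (1 + real_of_ereal (rhoV V)) \<and> 0 < LV V v \<and> LV V v < 1"
    if "inRstar V"
  proof -
    from \<open>inRstar V\<close> obtain r where r: "rhoV V = ereal r" "0 \<le> r"
      by (rule rhoV_finite)
    moreover have "rho v < r"
      using rho_less_rhoV[OF assms(1,4) Zv] r by simp
    ultimately show ?thesis
      using LV diff_divide_one_plus[OF r(2)] rho_nonneg[of v] by (simp add: L_of_rho_def)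
  qed
  have infinite: "LV V v = 1" if "\<not> inRstar V"
    using LV that assms(1) by (simp add: L_of_rho_def inRstar_def)
  show ?thesis
    using formula limit finite infinite LV_gen_seq_decseq_tendsto_0 by blast
qed

end
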